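(* Let $\phi_1,\dots,\phi_n,\psi_1,\dots,\psi_m$ be Drinfeld modules over $K$ with $\operatorname{rk}\phi_i>\operatorname{rk}\psi_j$ for all $i,j$. Then $\operatorname{Ext}^1_\tau\big(\prod_{i=1}^n\phi_i,\prod_{j=1}^m\psi_j\big)$ has a natural structure of a $\mathbf t$-module, i.e. there is a $\mathbf t$-module $\Pi:\mathbb F_q[t]\to\mathrm{Mat}_{m\sum_i\operatorname{rk}\phi_i}(K\{\tau\})$ whose Mordell–Weil $\mathbb F_q[t]$-module is isomorphic to $\operatorname{Ext}^1_\tau\big(\prod_i\phi_i,\prod_j\psi_j\big)$.
   Context: $A=\mathbb F_q[t]$, $K$ a field of characteristic $p$ with $\mathbb F_q$-algebra map $\iota:A\to K$, $\theta=\iota(t)$; $K\{\tau\}$ twisted polynomials, $\tau x=x^q\tau$. A $\mathbf t$-module of dimension $d$: $\mathbb F_q$-algebra homomorphism $\Phi:\mathbb F_q[t]\to\mathrm{Mat}_d(K\{\tau\})$, $\Phi_t=(\theta I+N)+\sum_{i\ge1}M_i\tau^i$, $N$ nilpotent; rank $=\deg_\tau\Phi_t$; Drinfeld module = dimension one. Mordell–Weil module: $K^d$ with $t$ acting by evaluation of $\Phi_t$. The product $\prod_{i=1}^n\phi_i$ is the $n$-dimensional $\mathbf t$-module $a\mapsto\mathrm{diag}(\phi_1(a),\dots,\phi_n(a))$. For $\mathbf t$-modules $\Phi$ (dim $d$), $\Psi$ (dim $e$): $\mathrm{Der}(\Phi,\Psi)$ = $\mathbb F_q$-linear $\delta:\mathbb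 F_q[t]\to\mathrm{Mat}_{e\times d}(K\{\tau\})$ with $\delta(ab)=\Psi_a\delta(b)+\delta(a)\Phi_b$; inner: $\delta^{(U)}(a)=U\Phi_a-\Psi_aU$; $\operatorname{Ext}^1_\tau(\Phi,\Psi)=\mathrm{Der}(\Phi,\Psi)/\mathrm{Der}_{in}(\Phi,\Psi)$ with $a*[\delta]=[\Psi_a\delta]$ (this is the group of extensions of $\Phi$ by $\Psi$). *)

theory Defs
  imports "HOL-Computational_Algebra.Polynomial"
begin

text \<open>Twisted polynomials K{tau} are represented by 'k poly: coefficient i is the
coefficient of tau^i.  The multiplication is twisted: (a tau^i)(b tau^j) = a b^(q^i) tau^(i+j).\<close>

definition tmul :: "nat \<Rightarrow> 'k::field poly \<Rightarrow> 'k poly \<Rightarrow> 'k poly" where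
  "tmul q f g = (\<Sum>i\<le>degree f. \<Sum>j\<le>degree g.
      monom (coeff f i * (coeff g j) ^ (q ^ i)) (i + j))"

definition teval :: "nat \<Rightarrow> 'k::field poly \<Rightarrow> 'k \<Rightarrow> 'k" where
  "teval q f x = (\<Sum>i\<le>degree f. coeff f i * x ^ (q ^ i))"

text \<open>Matrices over K{tau}: functions nat => nat => 'k poly, zero outside the index range.\<close>
type_synonym 'k tmat = "nat \<Rightarrow> nat \<Rightarrow> 'k poly"

definition mats :: "nat \<Rightarrow> nat \<Rightarrow> 'k::field tmat set" where
  "mats e d = {M. \<forall>i j. (d \<le> j \<or> e \<le> i) \<longrightarrow> M i j = 0}"

definition vecs :: "nat \<Rightarrow> (nat \<Rightarrow> 'k::field) set" where
  "vecs d = {v. \<forall>i. d \<le> i \<longrightarrow> v i = 0}"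

definition mmul :: "nat \<Rightarrow> nat \<Rightarrow> 'k::field tmat \<Rightarrow> 'k tmat \<Rightarrow> 'k tmat" where
  "mmul q k A B = (\<lambda>i j. \<Sum>l<k. tmul q (A i l) (B l j))"

definition madd :: "'k::field tmat \<Rightarrow> 'k tmat \<Rightarrow> 'k tmat" where
  "madd A B = (\<lambda>i j. A i j + B i j)"

definition msub :: "'k::field tmat \<Rightarrow> 'k tmat \<Rightarrow> 'k tmat" where
  "msub A B = (\<lambda>i j. A i j - B i j)"

definition msmul :: "'k::field \<Rightarrow> 'k tmat \<Rightarrow> 'k tmat" where
  "msmul c A = (\<lambda>i j. smult c (A i j))"

definition mid :: "nat \<Rightarrow> 'k::field tmat" where
  "mid d = (\<lambda>i j. if i = j \<and> i < d then 1 else 0)"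

fun mpow :: "nat \<Rightarrow> nat \<Rightarrow> 'k::field tmat \<Rightarrow> nat \<Rightarrow> 'k tmat" where
  "mpow q d M 0 = mid d"
| "mpow q d M (Suc n) = mmul q d M (mpow q d M n)"

definition mvec :: "nat \<Rightarrow> nat \<Rightarrow> 'k::field tmat \<Rightarrow> (nat \<Rightarrow> 'k) \<Rightarrow> (nat \<Rightarrow> 'k)" where
  "mvec q d M v = (\<lambda>i. \<Sum>j<d. teval q (M i j) (v j))"

text \<open>A = F_q[t], realised inside K[t] as the polynomials with coefficients in
F_q = {x in K. x^q = x}.\<close>
definition FqT :: "nat \<Rightarrow> 'k::field poly set" where
  "FqT q = {a. \<forall>i. coeff a i ^ q = coeff a i}"

text \<open>For a t-module given by Phi_t (d x d), Phi_a = a(Phi_t).\<close>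
definition tact :: "nat \<Rightarrow> nat \<Rightarrow> 'k::field tmat \<Rightarrow> 'k poly \<Rightarrow> 'k tmat" where
  "tact q d Phit a = (\<lambda>r s. \<Sum>i\<le>degree a. smult (coeff a i) (mpow q d Phit i r s))"

definition kmul :: "nat \<Rightarrow> (nat \<Rightarrow> nat \<Rightarrow> 'k::field) \<Rightarrow> (nat \<Rightarrow> nat \<Rightarrow> 'k) \<Rightarrow> (nat \<Rightarrow> nat \<Rightarrow> 'k)" where
  "kmul d A B = (\<lambda>i j. \<Sum>l<d. A i l * B l j)"

definition knilpotent :: "nat \<Rightarrow> (nat \<Rightarrow> nat \<Rightarrow> 'k::field) \<Rightarrow> bool" where
  "knilpotent d N \<longleftrightarrow> (\<exists>k. ((kmul d N) ^^ k) N = (\<lambda>i j. 0))"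

text \<open>t-module of dimension d: Phi_t = (theta I + N) + sum M_i tau^i, N nilpotent.\<close>
definition is_tmodule :: "nat \<Rightarrow> 'k::field \<Rightarrow> nat \<Rightarrow> 'k tmat \<Rightarrow> bool" where
  "is_tmodule q \<theta> d Phit \<longleftrightarrow> Phit \<in> mats d d \<and>
     knilpotent d (\<lambda>i j. coeff (Phit i j) 0 - (if i = j \<and> i < d then \<theta> else 0))"

definition is_drinfeld :: "'k::field \<Rightarrow> 'k poly \<Rightarrow> bool" where
  "is_drinfeld \<theta> f \<longleftrightarrow> coeff f 0 = \<theta> \<and> 1 \<le> degree f"

definition drank :: "'k::field poly \<Rightarrow> nat" where
  "drank f = degree f"

definition prodmod :: "nat \<Rightarrow> (nat \<Rightarrow> 'k::field poly) \<Rightarrow> 'k tmat" where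
  "prodmod n phis = (\<lambda>i j. if i = j \<and> i < n then phis i else 0)"

definition is_der :: "nat \<Rightarrow> nat \<Rightarrow> 'k::field tmat \<Rightarrow> nat \<Rightarrow> 'k tmat
    \<Rightarrow> ('k poly \<Rightarrow> 'k tmat) \<Rightarrow> bool" where
  "is_der q d Phit e Psit \<delta> \<longleftrightarrow>
     (\<forall>a\<in>FqT q. \<delta> a \<in> mats e d) \<and>
     (\<forall>a. a \<notin> FqT q \<longrightarrow> \<delta> a = (\<lambda>i j. 0)) \<and>
     (\<forall>a\<in>FqT q. \<forall>b\<in>FqT q. \<delta> (a + b) = madd (\<delta> a) (\<delta> b)) \<and>
     (\<forall>c a. c ^ q = c \<longrightarrow> a \<in> FqT q \<longrightarrow> \<delta> (smult c a) = msmul c (\<delta> a)) \<and>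
     (\<forall>a\<in>FqT q. \<forall>b\<in>FqT q. \<delta> (a * b) =
        madd (mmul q e (tact q e Psit a) (\<delta> b)) (mmul q d (\<delta> a) (tact q d Phit b)))"

definition is_inner_der :: "nat \<Rightarrow> nat \<Rightarrow> 'k::field tmat \<Rightarrow> nat \<Rightarrow> 'k tmat
    \<Rightarrow> ('k poly \<Rightarrow> 'k tmat) \<Rightarrow> bool" where
  "is_inner_der q d Phit e Psit \<delta> \<longleftrightarrow>
     (\<exists>U\<in>mats e d. \<forall>a\<in>FqT q.
        \<delta> a = msub (mmul q d U (tact q d Phit a)) (mmul q e (tact q e Psit a) U))"

text \<open>Ext^1_tau(Phi,Psi) = Der/Der_in is isomorphic as F_q[t]-module (a*[delta] = [Psi_a delta])
to the Mordell-Weil module of Pi (dimension D): expressed as a surjective F_q[t]-linear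
map from Der onto K^D whose fibres are exactly the cosets of Der_in.\<close>
definition ext_iso_MW :: "nat \<Rightarrow> nat \<Rightarrow> 'k::field tmat \<Rightarrow> nat \<Rightarrow> 'k tmat \<Rightarrow> nat \<Rightarrow> 'k tmat
    \<Rightarrow> (('k poly \<Rightarrow> 'k tmat) \<Rightarrow> (nat \<Rightarrow> 'k)) \<Rightarrow> bool" where
  "ext_iso_MW q d Phit e Psit D Pit F \<longleftrightarrow>
     (\<forall>\<delta>. is_der q d Phit e Psit \<delta> \<longrightarrow> F \<delta> \<in> vecs D) \<and>
     (\<forall>v\<in>vecs D. \<exists>\<delta>. is_der q d Phit e Psit \<delta> \<and> F \<delta> = v) \<and>
     (\<forall>\<delta>1 \<delta>2. is_der q d Phit e Psit \<delta>1 \<longrightarrow> is_der q d Phit e Psit \<delta>2 \<longrightarrow>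
        (F \<delta>1 = F \<delta>2 \<longleftrightarrow> is_inner_der q d Phit e Psit (\<lambda>a. msub (\<delta>1 a) (\<delta>2 a)))) \<and>
     (\<forall>\<delta>1 \<delta>2. is_der q d Phit e Psit \<delta>1 \<longrightarrow> is_der q d Phit e Psit \<delta>2 \<longrightarrow>
        F (\<lambda>a. madd (\<delta>1 a) (\<delta>2 a)) = (\<lambda>i. F \<delta>1 i + F \<delta>2 i)) \<and>
     (\<forall>a\<in>FqT q. \<forall>\<delta>. is_der q d Phit e Psit \<delta> \<longrightarrow>
        F (\<lambda>b. mmul q e (tact q e Psit a) (\<delta> b)) = mvec q D (tact q D Pit a) (F \<delta>))"

end

theory Submission
  imports Defs
begin

text \<open>
  A derivation \<open>\<delta> \<in> Der(\<phi>, \<psi>)\<close> between Drinfeld modules is determined by \<open>\<delta>(t) \<in> K{\<tau>}\<close>, which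
  can be arbitrary, and \<open>\<delta>\<close> is inner iff \<open>\<delta>(t) = U\<phi>\<^sub>t - \<psi>\<^sub>tU\<close>. If \<open>rk \<psi> < rk \<phi>\<close>, the
  \<tau>-degree of \<open>U\<phi>\<^sub>t - \<psi>\<^sub>tU\<close> is \<open>deg U + rk \<phi>\<close>, so division by these leading terms shows
  that every twisted polynomial is congruent to exactly one of \<tau>-degree \<open>< r = rk \<phi>\<close>: hence
  \<open>Ext\<^sup>1(\<phi>, \<psi>) \<cong> K\<^sup>r\<close> through the coefficients of the reduced representative of \<open>\<delta>(t)\<close>.
  Multiplying by \<open>\<psi>\<^sub>t\<close> and reducing again turns these coordinates into twisted polynomials in
  the old ones (by induction on the degree of a monomial being reduced), i.e. it is given by a matrix
  over \<open>K{\<tau>}\<close> with constant term \<open>\<psi>\<^sub>0 I = \<theta> I\<close>, and this matrix is \<open>\<Pi>\<^sub>t\<close>. For products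
  of Drinfeld modules everything decomposes entrywise into the blocks \<open>(j, i)\<close>.
\<close>

lemma sum_eq_single:
  assumes "finite A" "a \<in> A" "\<And>i. i \<in> A \<Longrightarrow> i \<noteq> a \<Longrightarrow> g i = 0"
  shows "sum g A = (g a :: 'b::comm_monoid_add)"
proof -
  have "sum g A = g a + sum g (A - {a})" using assms by (simp add: sum.remove)
  also have "sum g (A - {a}) = 0" using assms by (intro sum.neutral) auto
  finally show ?thesis by simp
qed

lemma smult_sum_right: "smult c (\<Sum>i\<in>A. F i) = (\<Sum>i\<in>A. smult (c::'k::field) (F i))"
  by (induction A rule: infinite_finite_induct) (auto simp: smult_add_right)

locale frobenius =
  fixes q :: nat and tyk :: "'k::field itself"
  assumes q_pos [simp]: "0 < q"
    and frobenius_add: "\<And>x y :: 'k. (x + y) ^ q = x ^ q + y ^ q"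
begin

lemma frobenius_sum: "(sum (f :: 'a \<Rightarrow> 'k) A) ^ q = (\<Sum>x\<in>A. f x ^ q)"
  by (induction A rule: infinite_finite_induct) (auto simp: frobenius_add)

lemma qpow_add: "((x::'k) + y) ^ (q ^ i) = x ^ (q ^ i) + y ^ (q ^ i)"
proof (induction i)
  case (Suc i)
  have "(x + y) ^ (q ^ Suc i) = ((x + y) ^ (q ^ i)) ^ q"
    by (simp add: mult.commute flip: power_mult)
  also have "\<dots> = (x ^ (q ^ i)) ^ q + (y ^ (q ^ i)) ^ q" using Suc frobenius_add by simp
  finally show ?case by (simp add: mult.commute flip: power_mult)
qed simp

lemma zero_qpow [simp]: "(0::'k) ^ (q ^ i) = 0"
  by simp

lemma qpow_minus: "(- (x::'k)) ^ (q ^ i) = - (x ^ (q ^ i))"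
  using qpow_add[of x "- x" i] by (simp add: eq_neg_iff_add_eq_0 add.commute)

lemma qpow_fixed: "(c::'k) ^ q = c \<Longrightarrow> c ^ (q ^ i) = c"
  by (induction i) (simp_all add: power_mult mult.commute)

lemma qpow_qpow: "((z::'k) ^ (q ^ b)) ^ (q ^ a) = z ^ (q ^ (a + b))"
  by (simp add: power_mult[symmetric] power_add mult.commute)

subsection \<open>Twisted polynomials\<close>

lemma coeff_tmul:
  "coeff (tmul q (f::'k poly) g) n = (\<Sum>i\<le>n. coeff f i * coeff g (n - i) ^ (q ^ i))"
proof -
  let ?h = "\<lambda>i. if i \<le> n then coeff f i * coeff g (n - i) ^ (q ^ i) else 0"
  have inner: "(\<Sum>j\<le>degree g. if i + j = n then coeff f i * coeff g j ^ (q ^ i) else 0) = ?h i"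
    for i
  proof (cases "i \<le> n \<and> n - i \<le> degree g")
    case True
    then show ?thesis by (subst sum_eq_single[of _ "n - i"]) auto
  next
    case False
    then show ?thesis by (auto intro!: sum.neutral simp: coeff_eq_0)
  qed
  have "coeff (tmul q f g) n = (\<Sum>i\<le>degree f. ?h i)"
    by (simp add: tmul_def coeff_sum coeff_monom inner)
  also have "\<dots> = (\<Sum>i\<le>max n (degree f). ?h i)"
    by (intro sum.mono_neutral_left) (auto simp: coeff_eq_0)
  also have "\<dots> = (\<Sum>i\<le>n. ?h i)"
    by (intro sum.mono_neutral_right) auto
  finally show ?thesis by simp
qed

lemma coeff_tmul_monom_left:
  "coeff (tmul q (monom (a::'k) j) g) n = (if j \<le> n then a * coeff g (n - j) ^ (q ^ j) else 0)"
  by (auto simp: coeff_tmul coeff_monom intro!: sum.neutral, subst sum_eq_single[of _ j], auto)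

lemma coeff_tmul_monom_right:
  "coeff (tmul q f (monom (b::'k) j)) n = (if j \<le> n then coeff f (n - j) * b ^ (q ^ (n - j)) else 0)"
  by (auto simp: coeff_tmul coeff_monom intro!: sum.neutral, subst sum_eq_single[of _ "n - j"], auto)

lemma tmul_add_left: "tmul q ((f::'k poly) + g) h = tmul q f h + tmul q g h"
  by (rule poly_eqI) (simp add: coeff_tmul distrib_right sum.distrib)

lemma tmul_add_right: "tmul q (f::'k poly) (g + h) = tmul q f g + tmul q f h"
  by (rule poly_eqI) (simp add: coeff_tmul qpow_add distrib_left sum.distrib)

lemma tmul_zero_left [simp]: "tmul q 0 (f::'k poly) = 0"
  by (rule poly_eqI) (simp add: coeff_tmul)

lemma tmul_zero_right [simp]: "tmul q (f::'k poly) 0 = 0"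
  by (rule poly_eqI) (simp add: coeff_tmul)

lemma tmul_minus_left: "tmul q (- (f::'k poly)) g = - tmul q f g"
  by (rule poly_eqI) (simp add: coeff_tmul sum_negf)

lemma tmul_minus_right: "tmul q (f::'k poly) (- g) = - tmul q f g"
  by (rule poly_eqI) (simp add: coeff_tmul qpow_minus sum_negf)

lemma tmul_diff_left: "tmul q ((f::'k poly) - g) h = tmul q f h - tmul q g h"
  using tmul_add_left[of f "- g" h] by (simp add: tmul_minus_left)

lemma tmul_diff_right: "tmul q (f::'k poly) (g - h) = tmul q f g - tmul q f h"
  using tmul_add_right[of f g "- h"] by (simp add: tmul_minus_right)

lemma tmul_smult_left: "tmul q (smult (c::'k) f) g = smult c (tmul q f g)"
  by (rule poly_eqI) (simp add: coeff_tmul sum_distrib_left mult.assoc)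

lemma tmul_smult_right:
  assumes "(c::'k) ^ q = c"
  shows "tmul q f (smult c g) = smult c (tmul q f g)"
  by (rule poly_eqI)
    (simp add: coeff_tmul sum_distrib_left power_mult_distrib qpow_fixed[OF assms] ac_simps)

lemma tmul_sum_left: "tmul q (\<Sum>x\<in>A. F x) (g::'k poly) = (\<Sum>x\<in>A. tmul q (F x) g)"
  by (induction A rule: infinite_finite_induct) (auto simp: tmul_add_left)

lemma tmul_sum_right: "tmul q (f::'k poly) (\<Sum>x\<in>A. G x) = (\<Sum>x\<in>A. tmul q f (G x))"
  by (induction A rule: infinite_finite_induct) (auto simp: tmul_add_right)

lemma tmul_monom_monom:
  "tmul q (monom (a::'k) i) (monom b j) = monom (a * b ^ (q ^ i)) (i + j)"
  by (rule poly_eqI) (auto simp: coeff_tmul_monom_left coeff_monom)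

lemma tmul_const_left: "tmul q [:(c::'k):] g = smult c g"
  using coeff_tmul_monom_left[of c 0 g] by (intro poly_eqI) (simp add: monom_0)

lemma tmul_one_left [simp]: "tmul q 1 (g::'k poly) = g"
  using tmul_const_left[of 1 g] by (simp add: one_pCons)

lemma tmul_one_right [simp]: "tmul q (f::'k poly) 1 = f"
  using coeff_tmul_monom_right[of f 1 0] by (intro poly_eqI) (simp add: monom_0 one_pCons)

lemma coeff_tmul_0: "coeff (tmul q (f::'k poly) g) 0 = coeff f 0 * coeff g 0"
  by (simp add: coeff_tmul)

lemma coeff_tmul_above_degree:
  assumes "degree f + degree g < n"
  shows "coeff (tmul q (f::'k poly) g) n = 0"
  unfolding coeff_tmul
proof (intro sum.neutral ballI)
  fix i assume "i \<in> {..n}"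
  then have "degree f < i \<or> degree g < n - i" using assms by linarith
  then show "coeff f i * coeff g (n - i) ^ q ^ i = 0" by (auto simp: coeff_eq_0)
qed

lemma coeff_tmul_degree:
  "coeff (tmul q (f::'k poly) g) (degree f + degree g) = lead_coeff f * lead_coeff g ^ (q ^ degree f)"
  unfolding coeff_tmul
proof (subst sum_eq_single[of _ "degree f"])
  fix i assume "i \<noteq> degree f"
  then have "degree f < i \<or> degree g < degree f + degree g - i" by linarith
  then show "coeff f i * coeff g (degree f + degree g - i) ^ q ^ i = 0" by (auto simp: coeff_eq_0)
qed auto

lemma tmul_assoc: "tmul q (tmul q (f::'k poly) g) h = tmul q f (tmul q g h)"
proof -
  let ?F = "\<lambda>a. monom (coeff f a) a" and ?G = "\<lambda>a. monom (coeff g a) a"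
    and ?H = "\<lambda>a. monom (coeff h a) a"
  have monoms: "tmul q (tmul q (?F a) (?G b)) (?H c) = tmul q (?F a) (tmul q (?G b) (?H c))"
    for a b c
    by (simp add: tmul_monom_monom power_mult_distrib qpow_qpow ac_simps)
  have "tmul q (tmul q f g) h =
      tmul q (tmul q (\<Sum>a\<le>degree f. ?F a) (\<Sum>b\<le>degree g. ?G b)) (\<Sum>c\<le>degree h. ?H c)"
    by (simp only: poly_as_sum_of_monoms)
  also have "\<dots> = tmul q (\<Sum>a\<le>degree f. ?F a) (tmul q (\<Sum>b\<le>degree g. ?G b) (\<Sum>c\<le>degree h. ?H c))"
    by (simp only: tmul_sum_left tmul_sum_right monoms)
  also have "\<dots> = tmul q f (tmul q g h)"
    by (simp only: poly_as_sum_of_monoms)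
  finally show ?thesis .
qed

lemma teval_eq_sum:
  assumes "degree f \<le> N"
  shows "teval q (f::'k poly) x = (\<Sum>i\<le>N. coeff f i * x ^ (q ^ i))"
  unfolding teval_def using assms
  by (intro sum.mono_neutral_left) (auto simp: coeff_eq_0)

lemma teval_add_poly: "teval q ((f::'k poly) + g) x = teval q f x + teval q g x"
proof -
  have "degree (f + g) \<le> max (degree f) (degree g)" by (rule degree_add_le) auto
  then show ?thesis
    by (simp add: teval_eq_sum[of _ "max (degree f) (degree g)"] distrib_right sum.distrib)
qed

lemma teval_zero_poly [simp]: "teval q 0 (x::'k) = 0"
  by (simp add: teval_def)

lemma teval_smult: "teval q (smult (c::'k) f) x = c * teval q f x"
  by (simp add: teval_def sum_distrib_left mult.assoc)

lemma teval_minus_poly: "teval q (- (f::'k poly)) x = - teval q f x"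
  using teval_smult[of "-1" f x] by simp

lemma teval_diff_poly: "teval q ((f::'k poly) - g) x = teval q f x - teval q g x"
  using teval_add_poly[of f "- g" x] by (simp add: teval_minus_poly)

lemma teval_sum_poly: "teval q (\<Sum>i\<in>A. F i) (x::'k) = (\<Sum>i\<in>A. teval q (F i) x)"
  by (induction A rule: infinite_finite_induct) (auto simp: teval_add_poly)

lemma teval_monom: "teval q (monom (a::'k) i) x = a * x ^ (q ^ i)"
  by (subst teval_eq_sum[of _ i]) (auto simp: coeff_monom degree_monom_le sum_eq_single[of _ i])

lemma teval_const: "teval q [:(a::'k):] x = a * x"
  using teval_monom[of a 0 x] by (simp add: monom_0)

lemma teval_one [simp]: "teval q 1 (x::'k) = x"
  using teval_const[of 1 x] by (simp add: one_pCons)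

lemma teval_add: "teval q f ((x::'k) + y) = teval q f x + teval q f y"
  by (simp add: teval_def qpow_add distrib_left sum.distrib)

lemma teval_zero [simp]: "teval q f (0::'k) = 0"
  by (simp add: teval_def)

lemma teval_sum: "teval q f (\<Sum>i\<in>A. (X i::'k)) = (\<Sum>i\<in>A. teval q f (X i))"
  by (induction A rule: infinite_finite_induct) (auto simp: teval_add)

lemma teval_tmul: "teval q (tmul q (f::'k poly) g) x = teval q f (teval q g x)"
proof -
  let ?F = "\<lambda>a. monom (coeff f a) a" and ?G = "\<lambda>a. monom (coeff g a) a"
  have monoms: "teval q (tmul q (?F a) (?G b)) x = teval q (?F a) (teval q (?G b) x)" for a b
    by (simp add: tmul_monom_monom teval_monom power_mult_distrib qpow_qpow ac_simps)
  have "teval q (tmul q f g) x = teval q (tmul q (\<Sum>a\<le>degree f. ?F a) (\<Sum>b\<le>degree g. ?G b)) x"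
    by (simp only: poly_as_sum_of_monoms)
  also have "\<dots> = teval q (\<Sum>a\<le>degree f. ?F a) (teval q (\<Sum>b\<le>degree g. ?G b) x)"
    by (simp only: tmul_sum_left tmul_sum_right teval_sum_poly teval_sum monoms)
  also have "\<dots> = teval q f (teval q g x)"
    by (simp only: poly_as_sum_of_monoms)
  finally show ?thesis .
qed

lemma mvec_mmul: "mvec q d (mmul q k A B) v = mvec q k A (mvec q d (B::'k tmat) v)"
proof (rule ext)
  fix i
  have "mvec q d (mmul q k A B) v i = (\<Sum>j<d. \<Sum>l<k. teval q (A i l) (teval q (B l j) (v j)))"
    by (simp add: mvec_def mmul_def teval_sum_poly teval_tmul)
  also have "\<dots> = (\<Sum>l<k. \<Sum>j<d. teval q (A i l) (teval q (B l j) (v j)))"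
    by (rule sum.swap)
  also have "\<dots> = mvec q k A (mvec q d B v) i"
    by (simp add: mvec_def teval_sum)
  finally show "mvec q d (mmul q k A B) v i = mvec q k A (mvec q d B v) i" .
qed

lemma mvec_cong: "(\<And>j. j < d \<Longrightarrow> v j = w j) \<Longrightarrow> mvec q d (M::'k tmat) v = mvec q d M w"
  by (simp add: mvec_def)

lemma mvec_vecs: "M \<in> mats e d' \<Longrightarrow> mvec q d (M::'k tmat) v \<in> vecs e"
  by (simp add: mats_def vecs_def mvec_def)

lemma mvec_mid: "v \<in> vecs d \<Longrightarrow> mvec q d (mid d) (v::nat \<Rightarrow> 'k) = v"
proof (rule ext)
  fix i assume v: "v \<in> vecs d"
  have "teval q (mid d i j) (v j) = (if j = i \<and> i < d then v i else 0)" for j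
    by (auto simp: mid_def)
  then show "mvec q d (mid d) v i = v i"
    using v by (cases "i < d") (simp_all add: mvec_def vecs_def)
qed

lemma mvec_mpow:
  "v \<in> vecs d \<Longrightarrow> mvec q d (mpow q d (M::'k tmat) l) v = (mvec q d M ^^ l) v"
  by (induction l) (auto simp: mvec_mid mvec_mmul)

lemma mvec_tact:
  "mvec q d (tact q d (M::'k tmat) a) v = (\<lambda>r. \<Sum>i\<le>degree a. coeff a i * mvec q d (mpow q d M i) v r)"
proof (rule ext)
  fix r
  have "mvec q d (tact q d M a) v r =
      (\<Sum>j<d. \<Sum>i\<le>degree a. coeff a i * teval q (mpow q d M i r j) (v j))"
    by (simp add: mvec_def tact_def teval_sum_poly teval_smult)
  also have "\<dots> = (\<Sum>i\<le>degree a. coeff a i * mvec q d (mpow q d M i) v r)"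
    by (subst sum.swap) (simp add: mvec_def sum_distrib_left)
  finally show "mvec q d (tact q d M a) v r = (\<Sum>i\<le>degree a. coeff a i * mvec q d (mpow q d M i) v r)" .
qed

lemma mmul_prodmod_left:
  "mmul q d (prodmod d f) (B::'k tmat) i j = (if i < d then tmul q (f i) (B i j) else 0)"
  by (auto simp: mmul_def prodmod_def sum_eq_single[of _ i])

lemma mmul_prodmod_right:
  "mmul q d (B::'k tmat) (prodmod d f) i j = (if j < d then tmul q (B i j) (f j) else 0)"
  by (auto simp: mmul_def prodmod_def sum_eq_single[of _ j])

end

fun tpow :: "nat \<Rightarrow> 'k::field poly \<Rightarrow> nat \<Rightarrow> 'k poly" where
  "tpow q f 0 = 1"
| "tpow q f (Suc l) = tmul q f (tpow q f l)"

definition dact :: "nat \<Rightarrow> 'k::field poly \<Rightarrow> 'k poly \<Rightarrow> 'k poly" where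
  "dact q f a = (\<Sum>l\<le>degree a. smult (coeff a l) (tpow q f l))"

context frobenius
begin

lemma mpow_prodmod: "mpow q d (prodmod d (f::nat \<Rightarrow> 'k poly)) l = prodmod d (\<lambda>i. tpow q (f i) l)"
proof (induction l)
  case 0
  then show ?case by (auto simp: mid_def prodmod_def)
next
  case (Suc l)
  show ?case
    by (intro ext) (simp only: mpow.simps Suc.IH mmul_prodmod_left, simp add: prodmod_def)
qed

lemma tact_prodmod: "tact q d (prodmod d (f::nat \<Rightarrow> 'k poly)) a = prodmod d (\<lambda>i. dact q (f i) a)"
  by (intro ext) (simp add: tact_def mpow_prodmod, auto simp: prodmod_def dact_def intro!: sum.neutral)

lemma FqT_add: "a \<in> FqT q \<Longrightarrow> b \<in> FqT q \<Longrightarrow> (a::'k poly) + b \<in> FqT q"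
  by (simp add: FqT_def frobenius_add)

lemma FqT_mult: "a \<in> FqT q \<Longrightarrow> b \<in> FqT q \<Longrightarrow> (a::'k poly) * b \<in> FqT q"
  by (simp add: FqT_def coeff_mult frobenius_sum power_mult_distrib)

lemma FqT_smult: "c ^ q = c \<Longrightarrow> a \<in> FqT q \<Longrightarrow> smult (c::'k) a \<in> FqT q"
  by (simp add: FqT_def power_mult_distrib)

lemma FqT_pCons: "pCons c a \<in> FqT q \<longleftrightarrow> (c::'k) ^ q = c \<and> a \<in> FqT q"
  unfolding FqT_def
proof safe
  assume h: "\<forall>i. coeff (pCons c a) i ^ q = coeff (pCons c a) i"
  show "c ^ q = c" using h[rule_format, of 0] by simp
  show "coeff a i ^ q = coeff a i" for i using h[rule_format, of "Suc i"] by simp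
next
  fix i assume "c ^ q = c" "\<forall>i. coeff a i ^ q = coeff a i"
  then show "coeff (pCons c a) i ^ q = coeff (pCons c a) i" by (cases i) simp_all
qed

lemma FqT_zero [simp]: "(0::'k poly) \<in> FqT q"
  by (simp add: FqT_def)

lemma FqT_one [simp]: "(1::'k poly) \<in> FqT q"
  by (simp add: one_pCons FqT_pCons)

lemma FqT_t [simp]: "([:0, 1:]::'k poly) \<in> FqT q"
  by (simp add: FqT_pCons)

lemma FqT_coeff: "a \<in> FqT q \<Longrightarrow> coeff (a::'k poly) i ^ q = coeff a i"
  by (simp add: FqT_def)

lemma tpow_Suc_right: "tpow q (f::'k poly) (Suc l) = tmul q (tpow q f l) f"
proof (induction l)
  case (Suc l)
  have "tpow q f (Suc (Suc l)) = tmul q f (tmul q (tpow q f l) f)" using Suc by simp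
  also have "\<dots> = tmul q (tpow q f (Suc l)) f" by (simp add: tmul_assoc)
  finally show ?case .
qed simp

lemma dact_eq_sum: "degree a < N \<Longrightarrow> dact q (f::'k poly) a = (\<Sum>l<N. smult (coeff a l) (tpow q f l))"
  unfolding dact_def by (intro sum.mono_neutral_left) (auto simp: coeff_eq_0)

lemma dact_add: "dact q (f::'k poly) (a + b) = dact q f a + dact q f b"
proof -
  let ?N = "Suc (max (degree a) (degree b))"
  have "degree (a + b) < ?N" using degree_add_le_max[of a b] by simp
  then show ?thesis
    by (simp add: dact_eq_sum[of _ ?N] smult_add_left sum.distrib)
qed

lemma dact_smult: "dact q (f::'k poly) (smult c a) = smult c (dact q f a)"
proof -
  have d: "degree (smult c a) < Suc (degree a)" using degree_smult_le[of c a] by simp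
  show ?thesis
    by (simp only: dact_eq_sum[of a "Suc (degree a)", OF lessI] dact_eq_sum[OF d]
        coeff_smult smult_sum_right smult_smult)
qed

lemma dact_const: "dact q (f::'k poly) [:c:] = [:c:]"
  by (simp add: dact_def)

lemma dact_zero [simp]: "dact q (f::'k poly) 0 = 0"
  by (simp add: dact_def)

lemma dact_one [simp]: "dact q (f::'k poly) 1 = 1"
  by (simp add: dact_def)

lemma dact_t [simp]: "dact q (f::'k poly) [:0, 1:] = f"
  by (simp add: dact_def)

lemma dact_pCons: "dact q (f::'k poly) (pCons c a) = [:c:] + tmul q (dact q f a) f"
proof -
  have d: "degree (pCons 0 a) < Suc (Suc (degree a))"
    by (simp add: degree_pCons_le le_imp_less_Suc)
  have "dact q f (pCons 0 a) = (\<Sum>l<Suc (Suc (degree a)). smult (coeff (pCons 0 a) l) (tpow q f l))"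
    by (rule dact_eq_sum[OF d])
  also have "\<dots> = (\<Sum>l<Suc (degree a). smult (coeff a l) (tpow q f (Suc l)))"
    by (subst sum.lessThan_Suc_shift) simp
  also have "\<dots> = tmul q (dact q f a) f"
    by (simp only: dact_eq_sum[of a "Suc (degree a)", OF lessI] tmul_sum_left tmul_smult_left
        tpow_Suc_right)
  finally have "dact q f (pCons 0 a) = tmul q (dact q f a) f" .
  moreover have "pCons c a = [:c:] + pCons 0 a" by simp
  ultimately show ?thesis by (simp only: dact_add dact_const)
qed

lemma dact_comm:
  assumes "a \<in> FqT q"
  shows "tmul q (f::'k poly) (dact q f a) = tmul q (dact q f a) f"
proof -
  have "tmul q f (tpow q f l) = tmul q (tpow q f l) f" for l
    using tpow_Suc_right[of f l] by simp
  then show ?thesis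
    using FqT_coeff[OF assms]
    by (simp add: dact_def tmul_sum_left tmul_sum_right tmul_smult_left tmul_smult_right
        del: tpow.simps)
qed

lemma dact_mult:
  "a \<in> FqT q \<Longrightarrow> b \<in> FqT q \<Longrightarrow> dact q (f::'k poly) (a * b) = tmul q (dact q f a) (dact q f b)"
proof (induction a rule: pCons_induct)
  case (pCons c a)
  from pCons.prems have a: "a \<in> FqT q" by (simp add: FqT_pCons)
  have "dact q f (pCons c a * b) = smult c (dact q f b) + tmul q (tmul q (dact q f a) (dact q f b)) f"
    by (simp add: dact_add dact_smult dact_pCons dact_const pCons.IH[OF a pCons.prems(2)])
  also have "\<dots> = tmul q (dact q f (pCons c a)) (dact q f b)"
    by (simp add: dact_pCons tmul_add_left tmul_const_left tmul_assoc dact_comm[OF pCons.prems(2)])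
  finally show ?case .
qed (simp add: dact_def)

end

subsection \<open>Derivations between Drinfeld modules\<close>

definition inner_t :: "nat \<Rightarrow> 'k::field poly \<Rightarrow> 'k poly \<Rightarrow> 'k poly \<Rightarrow> 'k poly" where
  "inner_t q \<phi> \<psi> U = tmul q U \<phi> - tmul q \<psi> U"

definition is_sder :: "nat \<Rightarrow> 'k::field poly \<Rightarrow> 'k poly \<Rightarrow> ('k poly \<Rightarrow> 'k poly) \<Rightarrow> bool" where
  "is_sder q \<phi> \<psi> d \<longleftrightarrow>
     (\<forall>a\<in>FqT q. \<forall>b\<in>FqT q. d (a + b) = d a + d b) \<and>
     (\<forall>c a. c ^ q = c \<longrightarrow> a \<in> FqT q \<longrightarrow> d (smult c a) = smult c (d a)) \<and>
     (\<forall>a\<in>FqT q. \<forall>b\<in>FqT q. d (a * b) = tmul q (dact q \<psi> a) (d b) + tmul q (d a) (dact q \<phi> b))"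

text \<open>The derivation \<open>\<delta>\<close> with \<open>\<delta>(t) = M\<close>: \<open>der_tpow q \<phi> \<psi> M l = \<delta>(t\<^sup>l)\<close>.\<close>

fun der_tpow :: "nat \<Rightarrow> 'k::field poly \<Rightarrow> 'k poly \<Rightarrow> 'k poly \<Rightarrow> nat \<Rightarrow> 'k poly" where
  "der_tpow q \<phi> \<psi> M 0 = 0"
| "der_tpow q \<phi> \<psi> M (Suc l) = tmul q \<psi> (der_tpow q \<phi> \<psi> M l) + tmul q M (tpow q \<phi> l)"

definition der_of :: "nat \<Rightarrow> 'k::field poly \<Rightarrow> 'k poly \<Rightarrow> 'k poly \<Rightarrow> 'k poly \<Rightarrow> 'k poly" where
  "der_of q \<phi> \<psi> M a = (\<Sum>l\<le>degree a. smult (coeff a l) (der_tpow q \<phi> \<psi> M l))"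

context frobenius
begin

lemma inner_t_add: "inner_t q \<phi> \<psi> (U + V) = inner_t q \<phi> \<psi> U + inner_t q \<phi> \<psi> (V::'k poly)"
  by (simp add: inner_t_def tmul_add_left tmul_add_right)

lemma inner_t_diff: "inner_t q \<phi> \<psi> (U - V) = inner_t q \<phi> \<psi> U - inner_t q \<phi> \<psi> (V::'k poly)"
  by (simp add: inner_t_def tmul_diff_left tmul_diff_right)

lemma inner_t_smult:
  "c ^ q = c \<Longrightarrow> inner_t q \<phi> \<psi> (smult c U) = smult (c::'k) (inner_t q \<phi> \<psi> U)"
  by (simp add: inner_t_def tmul_smult_left tmul_smult_right smult_diff_right)

lemma inner_t_tmul_left: "inner_t q \<phi> \<psi> (tmul q \<psi> U) = tmul q \<psi> (inner_t q \<phi> \<psi> (U::'k poly))"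
  by (simp add: inner_t_def tmul_diff_right tmul_assoc)

lemma is_sder_diff:
  "is_sder q \<phi> \<psi> d1 \<Longrightarrow> is_sder q \<phi> \<psi> d2 \<Longrightarrow> is_sder q \<phi> \<psi> (\<lambda>a. d1 a - (d2 a :: 'k poly))"
  by (simp add: is_sder_def tmul_diff_left tmul_diff_right smult_diff_right algebra_simps)

lemma is_sder_inner: "is_sder q \<phi> \<psi> (\<lambda>a. tmul q U (dact q \<phi> a) - tmul q (dact q \<psi> a) (U::'k poly))"
  unfolding is_sder_def
proof (intro conjI ballI allI impI)
  fix a b :: "'k poly" assume "a \<in> FqT q" "b \<in> FqT q"
  then show "tmul q U (dact q \<phi> (a * b)) - tmul q (dact q \<psi> (a * b)) U =
    tmul q (dact q \<psi> a) (tmul q U (dact q \<phi> b) - tmul q (dact q \<psi> b) U) +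
    tmul q (tmul q U (dact q \<phi> a) - tmul q (dact q \<psi> a) U) (dact q \<phi> b)"
    by (simp add: dact_mult tmul_diff_left tmul_diff_right tmul_assoc)
qed (simp_all add: dact_add dact_smult tmul_add_left tmul_add_right tmul_smult_left
      tmul_smult_right smult_diff_right)

lemma is_sder_zero:
  assumes d: "is_sder q \<phi> \<psi> d" and t: "d [:0, 1:] = (0::'k poly)" and a: "a \<in> FqT q"
  shows "d a = 0"
proof -
  have add: "\<And>a b. a \<in> FqT q \<Longrightarrow> b \<in> FqT q \<Longrightarrow> d (a + b) = d a + d b"
    and smult: "\<And>c a. c ^ q = c \<Longrightarrow> a \<in> FqT q \<Longrightarrow> d (smult c a) = smult c (d a)"
    and mult: "\<And>a b. a \<in> FqT q \<Longrightarrow> b \<in> FqT q \<Longrightarrow>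
      d (a * b) = tmul q (dact q \<psi> a) (d b) + tmul q (d a) (dact q \<phi> b)"
    using d by (simp_all add: is_sder_def)
  have "d 1 = d 1 + d 1" using mult[of 1 1] by simp
  then have d1: "d 1 = 0" by (metis add_cancel_right_right)
  show ?thesis
    using a
  proof (induction a rule: pCons_induct)
    case 0
    show ?case using add[of 0 0] by (metis FqT_zero add_0 add_cancel_right_right)
  next
    case (pCons c a)
    then have c: "c ^ q = c" and a: "a \<in> FqT q" by (simp_all add: FqT_pCons)
    have "pCons c a = smult c 1 + a * [:0, 1:]" by simp
    then have "d (pCons c a) = smult c (d 1) + d (a * [:0, 1:])"
      using add[of "smult c 1" "a * [:0, 1:]"] smult[OF c FqT_one] c a
      by (simp add: FqT_pCons)
    then show ?case using mult[OF a FqT_t] pCons.IH[OF a] t d1 by simp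
  qed
qed

lemma is_sder_unique:
  assumes "is_sder q \<phi> \<psi> d1" "is_sder q \<phi> \<psi> d2" "d1 [:0, 1:] = (d2 [:0, 1:] :: 'k poly)"
    and "a \<in> FqT q"
  shows "d1 a = d2 a"
  using is_sder_zero[OF is_sder_diff[OF assms(1,2)]] assms(3,4) by simp

lemma der_of_eq_sum:
  "degree a < N \<Longrightarrow> der_of q \<phi> \<psi> (M::'k poly) a = (\<Sum>l<N. smult (coeff a l) (der_tpow q \<phi> \<psi> M l))"
  unfolding der_of_def by (intro sum.mono_neutral_left) (auto simp: coeff_eq_0)

lemma der_of_add: "der_of q \<phi> \<psi> (M::'k poly) (a + b) = der_of q \<phi> \<psi> M a + der_of q \<phi> \<psi> M b"
proof -
  let ?N = "Suc (max (degree a) (degree b))"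
  have "degree (a + b) < ?N" using degree_add_le_max[of a b] by simp
  then show ?thesis
    by (simp add: der_of_eq_sum[of _ ?N] smult_add_left sum.distrib)
qed

lemma der_of_smult: "der_of q \<phi> \<psi> (M::'k poly) (smult c a) = smult c (der_of q \<phi> \<psi> M a)"
proof -
  have d: "degree (smult c a) < Suc (degree a)" using degree_smult_le[of c a] by simp
  show ?thesis
    by (simp only: der_of_eq_sum[of a "Suc (degree a)", OF lessI] der_of_eq_sum[OF d]
        coeff_smult smult_sum_right smult_smult)
qed

lemma der_of_t: "der_of q \<phi> \<psi> (M::'k poly) [:0, 1:] = M"
  by (simp add: der_of_def)

lemma der_of_pCons:
  assumes a: "a \<in> FqT q"
  shows "der_of q \<phi> \<psi> (M::'k poly) (pCons c a) =
    tmul q \<psi> (der_of q \<phi> \<psi> M a) + tmul q M (dact q \<phi> a)"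
proof -
  let ?N = "Suc (degree a)"
  have d: "degree (pCons 0 a) < Suc ?N" by (simp add: degree_pCons_le le_imp_less_Suc)
  have "der_of q \<phi> \<psi> M (pCons 0 a) =
      (\<Sum>l<Suc ?N. smult (coeff (pCons 0 a) l) (der_tpow q \<phi> \<psi> M l))"
    by (rule der_of_eq_sum[OF d])
  also have "\<dots> = (\<Sum>l<?N. smult (coeff a l) (der_tpow q \<phi> \<psi> M (Suc l)))"
    by (subst sum.lessThan_Suc_shift) simp
  also have "\<dots> = (\<Sum>l<?N. tmul q \<psi> (smult (coeff a l) (der_tpow q \<phi> \<psi> M l)) +
       tmul q M (smult (coeff a l) (tpow q \<phi> l)))"
    using a by (simp add: tmul_smult_right FqT_coeff smult_add_right)
  also have "\<dots> = tmul q \<psi> (der_of q \<phi> \<psi> M a) + tmul q M (dact q \<phi> a)"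
    by (simp only: der_of_eq_sum[of a ?N, OF lessI] dact_eq_sum[of a ?N, OF lessI]
        tmul_sum_right sum.distrib)
  finally have "der_of q \<phi> \<psi> M (pCons 0 a) = \<dots>" .
  moreover have "der_of q \<phi> \<psi> M [:c:] = 0" by (simp add: der_of_def)
  moreover have "pCons c a = [:c:] + pCons 0 a" by simp
  ultimately show ?thesis by (simp only: der_of_add add_0_left)
qed

lemma der_of_mult:
  "a \<in> FqT q \<Longrightarrow> b \<in> FqT q \<Longrightarrow> der_of q \<phi> \<psi> (M::'k poly) (a * b) =
     tmul q (dact q \<psi> a) (der_of q \<phi> \<psi> M b) + tmul q (der_of q \<phi> \<psi> M a) (dact q \<phi> b)"
proof (induction a rule: pCons_induct)
  case (pCons c a)
  from pCons.prems have a: "a \<in> FqT q" by (simp add: FqT_pCons)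
  have ab: "a * b \<in> FqT q" using a pCons.prems by (simp add: FqT_mult)
  have "der_of q \<phi> \<psi> M (pCons c a * b) =
      smult c (der_of q \<phi> \<psi> M b) + tmul q \<psi> (der_of q \<phi> \<psi> M (a * b)) + tmul q M (dact q \<phi> (a * b))"
    using der_of_pCons[OF ab, where c = 0] by (simp add: der_of_add der_of_smult)
  also have "\<dots> = smult c (der_of q \<phi> \<psi> M b)
      + tmul q \<psi> (tmul q (dact q \<psi> a) (der_of q \<phi> \<psi> M b) + tmul q (der_of q \<phi> \<psi> M a) (dact q \<phi> b))
      + tmul q M (tmul q (dact q \<phi> a) (dact q \<phi> b))"
    by (simp add: pCons.IH[OF a pCons.prems(2)] dact_mult[OF a pCons.prems(2)])
  also have "\<dots> = tmul q (dact q \<psi> (pCons c a)) (der_of q \<phi> \<psi> M b) +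
      tmul q (der_of q \<phi> \<psi> M (pCons c a)) (dact q \<phi> b)"
    by (simp add: dact_pCons der_of_pCons[OF a] tmul_add_left tmul_add_right tmul_const_left
        tmul_assoc dact_comm[OF a, symmetric] add_ac)
  finally show ?case .
qed (simp add: der_of_def)

end

subsection \<open>Reduction modulo inner derivations\<close>

context frobenius
begin

lemma coeff_inner_t_monom:
  "coeff (inner_t q \<phi> \<psi> (monom u j)) l =
     (if j \<le> l then u * coeff \<phi> (l - j) ^ (q ^ j) - coeff \<psi> (l - j) * u ^ (q ^ (l - j)) else (0::'k))"
  by (simp add: inner_t_def coeff_tmul_monom_left coeff_tmul_monom_right)

lemma coeff_inner_t_monom_teval: "\<exists>g. \<forall>u. coeff (inner_t q \<phi> \<psi> (monom u j)) l = teval q g (u::'k)"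
proof
  let ?g = "if j \<le> l then [:coeff \<phi> (l - j) ^ (q ^ j):] - monom (coeff \<psi> (l - j)) (l - j) else 0"
  show "\<forall>u. coeff (inner_t q \<phi> \<psi> (monom u j)) l = teval q ?g u"
    by (simp add: coeff_inner_t_monom teval_diff_poly teval_const teval_monom mult.commute)
qed

end

definition reduce :: "nat \<Rightarrow> 'k::field poly \<Rightarrow> 'k poly \<Rightarrow> 'k poly \<Rightarrow> 'k poly" where
  "reduce q \<phi> \<psi> X = (SOME R. degree R < degree \<phi> \<and> (\<exists>U. X = R + inner_t q \<phi> \<psi> U))"

locale rank_gap = frobenius q tyk for q and tyk :: "'k::field itself" +
  fixes \<phi> \<psi> :: "'k poly"
  assumes degree_less: "degree \<psi> < degree \<phi>"
begin

abbreviation "rk \<equiv> degree \<phi>"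

abbreviation "L \<equiv> inner_t q \<phi> \<psi>"

abbreviation "red \<equiv> reduce q \<phi> \<psi>"

lemma rank_pos: "0 < rk"
  using degree_less by simp

lemma coeff_inner_t_degree:
  assumes "U \<noteq> 0"
  shows "coeff (L U) (degree U + rk) \<noteq> 0"
proof -
  have "coeff (tmul q U \<phi>) (degree U + rk) = lead_coeff U * lead_coeff \<phi> ^ (q ^ degree U)"
    by (rule coeff_tmul_degree)
  moreover have "\<phi> \<noteq> 0" using degree_less by auto
  moreover have "coeff (tmul q \<psi> U) (degree U + rk) = 0"
    using degree_less by (intro coeff_tmul_above_degree) simp
  ultimately show ?thesis using assms by (simp add: inner_t_def)
qed

lemma coeff_inner_t_cancel:
  assumes "rk \<le> N" "N \<le> l"
  shows "coeff (L (monom (u * inverse (lead_coeff \<phi> ^ (q ^ (N - rk)))) (N - rk))) l =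
    (if l = N then u else 0)"
proof (cases "l = N")
  case True
  have "\<phi> \<noteq> 0" using degree_less by auto
  moreover have "coeff \<psi> rk = 0" using degree_less by (simp add: coeff_eq_0)
  ultimately show ?thesis using True assms by (simp add: coeff_inner_t_monom)
next
  case False
  then have "rk < l - (N - rk)" "degree \<psi> < l - (N - rk)" using assms degree_less by linarith+
  then show ?thesis using False assms by (simp add: coeff_inner_t_monom coeff_eq_0)
qed

lemma reduce_exists: "\<exists>R U. degree R < rk \<and> X = R + L U"
proof (induction "degree X" arbitrary: X rule: less_induct)
  case less
  show ?case
  proof (cases "degree X < rk")
    case True
    then show ?thesis by (intro exI[of _ X] exI[of _ 0]) (simp add: inner_t_def)
  next
    case False
    let ?N = "degree X"
    let ?V = "monom (lead_coeff X * inverse (lead_coeff \<phi> ^ (q ^ (?N - rk)))) (?N - rk)"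
    have "degree (X - L ?V) \<le> ?N - 1"
      using False degree_less
      by (intro degree_le) (auto simp: coeff_inner_t_cancel coeff_eq_0 simp del: lead_coeff_monom)
    then have "degree (X - L ?V) < ?N" using False degree_less by linarith
    then obtain R U where "degree R < rk" "X - L ?V = R + L U" using less by blast
    then have "degree R < rk \<and> X = R + L (U + ?V)" by (simp add: inner_t_add algebra_simps)
    then show ?thesis by blast
  qed
qed

lemma reduced_inner_t_eq_0:
  assumes "degree R < rk" "R = L U"
  shows "R = 0"
proof (cases "U = 0")
  case False
  then have "coeff R (degree U + rk) \<noteq> 0" using assms(2) coeff_inner_t_degree by simp
  then show ?thesis using assms(1) by (simp add: coeff_eq_0)
qed (simp add: assms inner_t_def)

lemma reduce_spec: "degree (red X) < rk \<and> (\<exists>U. X = red X + L U)"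
  unfolding reduce_def by (rule someI_ex) (use reduce_exists in blast)

lemma degree_reduce: "degree (red X) < rk"
  using reduce_spec by blast

lemma reduce_eq:
  assumes "degree R < rk" "X = R + L U"
  shows "red X = R"
proof -
  obtain U' where "X = red X + L U'" using reduce_spec by blast
  then have "red X - R = L (U - U')" using assms(2) by (simp add: inner_t_diff algebra_simps)
  moreover have "degree (red X - R) < rk"
    using degree_reduce[of X] assms(1) degree_diff_le_max[of "red X" R] by linarith
  ultimately show ?thesis using reduced_inner_t_eq_0 by fastforce
qed

lemma reduce_reduced: "degree R < rk \<Longrightarrow> red R = R"
  by (rule reduce_eq[of R R 0]) (simp_all add: inner_t_def)

lemma reduce_0 [simp]: "red 0 = 0"
  using reduce_reduced rank_pos by simp

lemma reduce_add: "red (X + Y) = red X + red Y"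
proof -
  obtain U V where "X = red X + L U" "Y = red Y + L V" using reduce_spec by blast
  then have "X + Y = (red X + red Y) + L (U + V)" by (simp add: inner_t_add algebra_simps)
  moreover have "degree (red X + red Y) < rk"
    using degree_add_le_max[of "red X" "red Y"] degree_reduce[of X] degree_reduce[of Y] by linarith
  ultimately show ?thesis by (intro reduce_eq)
qed

lemma reduce_sum: "red (\<Sum>i\<in>A. X i) = (\<Sum>i\<in>A. red (X i))"
  by (induction A rule: infinite_finite_induct) (simp_all add: reduce_add)

lemma reduce_smult: "c ^ q = c \<Longrightarrow> red (smult c X) = smult c (red X)"
proof -
  assume c: "c ^ q = c"
  obtain U where "X = red X + L U" using reduce_spec by blast
  then have "smult c X = smult c (red X) + L (smult c U)"
    by (simp add: inner_t_smult[OF c] smult_add_right[symmetric])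
  moreover have "degree (smult c (red X)) < rk"
    using degree_smult_le[of c "red X"] degree_reduce[of X] by linarith
  ultimately show ?thesis by (intro reduce_eq)
qed

lemma reduce_inner_t: "red (X + L U) = red X"
  using reduce_add[of X "L U"] reduce_eq[of 0 "L U" U] rank_pos by simp

lemma reduce_eq_iff: "red X = red Y \<longleftrightarrow> (\<exists>U. X - Y = L U)"
proof
  obtain U V where U: "X = red X + L U" and V: "Y = red Y + L V" using reduce_spec by blast
  assume "red X = red Y"
  then have "X - Y = L (U - V)" using U V by (simp add: inner_t_diff algebra_simps)
  then show "\<exists>U. X - Y = L U" ..
next
  assume "\<exists>U. X - Y = L U"
  then obtain U where "X = Y + L U" by (auto simp: algebra_simps)
  then show "red X = red Y" by (simp add: reduce_inner_t)
qed

lemma reduce_tmul_reduce: "red (tmul q \<psi> (red Y)) = red (tmul q \<psi> Y)"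
proof -
  obtain U where "Y = red Y + L U" using reduce_spec by blast
  then have "tmul q \<psi> Y = tmul q \<psi> (red Y) + L (tmul q \<psi> U)"
    by (metis inner_t_tmul_left tmul_add_right)
  then show ?thesis by (simp add: reduce_inner_t)
qed

lemma reduce_monom_lower:
  assumes "rk \<le> s"
  shows "\<exists>h. \<forall>x. red (monom x s) = (\<Sum>l<s. red (monom (teval q (h l) x) l))"
proof -
  let ?c = "inverse (lead_coeff \<phi> ^ (q ^ (s - rk)))"
  obtain g where g: "\<And>l u. coeff (L (monom u (s - rk))) l = teval q (g l) u"
    using coeff_inner_t_monom_teval[of \<phi> \<psi> "s - rk"] by metis
  define h where "h l = - tmul q (g l) [:?c:]" for l
  have "red (monom x s) = (\<Sum>l<s. red (monom (teval q (h l) x) l))" for x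
  proof -
    let ?V = "monom (x * ?c) (s - rk)"
    have s: "0 < s" "{..s - 1} = {..<s}" using assms rank_pos by auto
    have "degree (monom x s - L ?V) \<le> s - 1"
      using assms s by (intro degree_le) (auto simp: coeff_inner_t_cancel)
    then have "monom x s - L ?V = (\<Sum>l<s. monom (coeff (monom x s - L ?V) l) l)"
      unfolding s(2)[symmetric] by (rule poly_as_sum_of_monoms'[symmetric])
    also have "\<dots> = (\<Sum>l<s. monom (teval q (h l) x) l)"
      by (intro sum.cong refl) (simp add: g h_def teval_minus_poly teval_tmul teval_const mult.commute)
    finally have "monom x s = (\<Sum>l<s. monom (teval q (h l) x) l) + L ?V"
      by (simp add: algebra_simps)
    then show ?thesis by (simp add: reduce_inner_t reduce_sum)
  qed
  then show ?thesis by blast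
qed

text \<open>For \<open>s < rk\<close> the polynomials are fixed literally: over a finite \<open>K\<close> a twisted
  polynomial is not determined by the function it induces, and their constant terms matter below.\<close>

lemma reduce_monom_teval:
  "\<exists>f. (\<forall>x l. coeff (red (monom x s)) l = teval q (f l) x) \<and>
       (s < rk \<longrightarrow> f = (\<lambda>l. if l = s then 1 else 0))"
proof (induction s rule: less_induct)
  case (less s)
  show ?case
  proof (cases "s < rk")
    case True
    then have "coeff (red (monom x s)) l = teval q (if l = s then 1 else 0) x" for x l
      using degree_monom_le[of x s] by (auto simp: reduce_reduced)
    then show ?thesis by (intro exI[of _ "\<lambda>l. if l = s then 1 else 0"]) simp
  next
    case False
    then obtain h where h: "\<And>x. red (monom x s) = (\<Sum>l<s. red (monom (teval q (h l) x) l))"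
      using reduce_monom_lower by (meson not_less)
    obtain F where F: "\<And>s' x l. s' < s \<Longrightarrow> coeff (red (monom x s')) l = teval q (F s' l) x"
      using less by metis
    have "coeff (red (monom x s)) l = teval q (\<Sum>l'<s. tmul q (F l' l) (h l')) x" for x l
      by (simp add: h coeff_sum F teval_sum_poly teval_tmul)
    then show ?thesis using False by (intro exI[of _ "\<lambda>l. \<Sum>l'<s. tmul q (F l' l) (h l')"]) simp
  qed
qed

lemma coeff_reduce_tmul:
  assumes f: "\<And>s x l. coeff (red (monom x s)) l = teval q (f s l) x" and R: "degree R < rk"
  shows "coeff (red (tmul q \<psi> R)) l =
    (\<Sum>l'<rk. teval q (\<Sum>n\<le>degree \<psi>. tmul q (f (n + l') l) (monom (coeff \<psi> n) n)) (coeff R l'))"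
proof -
  have "tmul q \<psi> R = (\<Sum>n\<le>degree \<psi>. \<Sum>l'<rk. monom (coeff \<psi> n * coeff R l' ^ (q ^ n)) (n + l'))"
    unfolding tmul_def using R
    by (intro sum.cong refl sum.mono_neutral_left) (auto simp: coeff_eq_0)
  then have "coeff (red (tmul q \<psi> R)) l =
      (\<Sum>n\<le>degree \<psi>. \<Sum>l'<rk. teval q (f (n + l') l) (coeff \<psi> n * coeff R l' ^ (q ^ n)))"
    by (simp add: reduce_sum coeff_sum f)
  also have "\<dots> = (\<Sum>l'<rk. teval q (\<Sum>n\<le>degree \<psi>. tmul q (f (n + l') l) (monom (coeff \<psi> n) n))
      (coeff R l'))"
    by (subst sum.swap) (simp add: teval_sum_poly teval_tmul teval_monom)
  finally show ?thesis .
qed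

lemma mult_matrix_exists:
  "\<exists>P. (\<forall>l l'. coeff (P l l') 0 = (if l = l' \<and> l < rk then coeff \<psi> 0 else 0)) \<and>
     (\<forall>Y. mvec q rk P (coeff (red Y)) = coeff (red (tmul q \<psi> Y)))"
proof -
  obtain f where f: "\<And>s x l. coeff (red (monom x s)) l = teval q (f s l) x"
    and f_low: "\<And>s. s < rk \<Longrightarrow> f s = (\<lambda>l. if l = s then 1 else 0)"
    using reduce_monom_teval by metis
  define P where "P l l' = (if l < rk \<and> l' < rk
    then \<Sum>n\<le>degree \<psi>. tmul q (f (n + l') l) (monom (coeff \<psi> n) n) else 0)" for l l'
  have "coeff (P l l') 0 = (if l = l' \<and> l < rk then coeff \<psi> 0 else 0)" for l l'
  proof -
    have "coeff (tmul q A (monom c n)) 0 = (if n = 0 then coeff A 0 * c else 0)" for A :: "'k poly" and c n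
      by (simp add: coeff_tmul_0 coeff_monom)
    then show ?thesis by (auto simp: P_def coeff_sum f_low)
  qed
  moreover have "mvec q rk P (coeff (red Y)) = coeff (red (tmul q \<psi> Y))" for Y
  proof (rule ext)
    fix l
    show "mvec q rk P (coeff (red Y)) l = coeff (red (tmul q \<psi> Y)) l"
    proof (cases "l < rk")
      case True
      then show ?thesis using coeff_reduce_tmul[OF f degree_reduce[of Y], of l]
        by (simp add: mvec_def P_def reduce_tmul_reduce)
    next
      case False
      then show ?thesis using degree_reduce[of "tmul q \<psi> Y"]
        by (simp add: mvec_def P_def coeff_eq_0)
    qed
  qed
  ultimately show ?thesis by blast
qed

end

definition mult_mat :: "nat \<Rightarrow> 'k::field poly \<Rightarrow> 'k poly \<Rightarrow> 'k tmat" where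
  "mult_mat q \<phi> \<psi> = (SOME P.
     (\<forall>l l'. coeff (P l l') 0 = (if l = l' \<and> l < degree \<phi> then coeff \<psi> 0 else 0)) \<and>
     (\<forall>Y. mvec q (degree \<phi>) P (coeff (reduce q \<phi> \<psi> Y)) = coeff (reduce q \<phi> \<psi> (tmul q \<psi> Y))))"

context rank_gap
begin

lemma mult_mat:
  shows coeff_mult_mat_0:
      "coeff (mult_mat q \<phi> \<psi> l l') 0 = (if l = l' \<and> l < rk then coeff \<psi> 0 else 0)"
    and mvec_mult_mat: "mvec q rk (mult_mat q \<phi> \<psi>) (coeff (red Y)) = coeff (red (tmul q \<psi> Y))"
  using someI_ex[OF mult_matrix_exists] unfolding mult_mat_def by blast+

end

context frobenius
begin

lemma is_der_entry:
  assumes d: "is_der q n (prodmod n \<phi>s) m (prodmod m \<psi>s) \<delta>" and j: "j < m" and i: "i < n"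
  shows "is_sder q (\<phi>s i) (\<psi>s j) (\<lambda>a. \<delta> a j i :: 'k poly)"
  using assms
  by (auto simp: is_der_def is_sder_def madd_def msmul_def tact_prodmod mmul_prodmod_left
      mmul_prodmod_right)

lemma is_der_of_entries:
  "\<exists>\<delta>. is_der q n (prodmod n \<phi>s) m (prodmod m \<psi>s) \<delta> \<and>
     (\<forall>j<m. \<forall>i<n. \<delta> [:0, 1:] j i = (M j i :: 'k poly))"
proof -
  define \<delta> where "\<delta> a = (if a \<in> FqT q
    then (\<lambda>j i. if j < m \<and> i < n then der_of q (\<phi>s i) (\<psi>s j) (M j i) a else 0)
    else (\<lambda>j i. 0))" for a
  have "is_der q n (prodmod n \<phi>s) m (prodmod m \<psi>s) \<delta>"
    unfolding is_der_def
  proof (intro conjI ballI allI impI)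
    fix a b :: "'k poly" assume "a \<in> FqT q" "b \<in> FqT q"
    then show "\<delta> (a * b) = madd (mmul q m (tact q m (prodmod m \<psi>s) a) (\<delta> b))
        (mmul q n (\<delta> a) (tact q n (prodmod n \<phi>s) b))"
      by (intro ext) (simp add: \<delta>_def madd_def tact_prodmod mmul_prodmod_left mmul_prodmod_right
          FqT_mult der_of_mult)
  qed (auto simp: \<delta>_def mats_def madd_def msmul_def FqT_add FqT_smult der_of_add der_of_smult
      intro!: ext)
  moreover have "\<forall>j<m. \<forall>i<n. \<delta> [:0, 1:] j i = M j i"
    by (simp add: \<delta>_def der_of_t)
  ultimately show ?thesis by blast
qed

lemma inner_der_at_t:
  assumes "is_inner_der q n (prodmod n \<phi>s) m (prodmod m \<psi>s) \<delta>" "j < m" "i < n"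
  shows "\<exists>U. \<delta> [:0, 1:] j i = inner_t q (\<phi>s i) (\<psi>s j) (U :: 'k poly)"
proof -
  obtain U where "\<delta> [:0, 1:] = msub (mmul q n U (prodmod n \<phi>s)) (mmul q m (prodmod m \<psi>s) U)"
    using assms(1) FqT_t by (auto simp: is_inner_der_def tact_prodmod)
  then show ?thesis
    using assms(2,3) by (auto simp: msub_def mmul_prodmod_left mmul_prodmod_right inner_t_def)
qed

lemma is_inner_derI:
  assumes d1: "is_der q n (prodmod n \<phi>s) m (prodmod m \<psi>s) \<delta>1"
    and d2: "is_der q n (prodmod n \<phi>s) m (prodmod m \<psi>s) \<delta>2"
    and t: "\<forall>j<m. \<forall>i<n. \<exists>U. \<delta>1 [:0, 1:] j i - \<delta>2 [:0, 1:] j i = inner_t q (\<phi>s i) (\<psi>s j) (U :: 'k poly)"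
  shows "is_inner_der q n (prodmod n \<phi>s) m (prodmod m \<psi>s) (\<lambda>a. msub (\<delta>1 a) (\<delta>2 a))"
proof -
  obtain U where U: "\<And>j i. j < m \<Longrightarrow> i < n \<Longrightarrow>
      \<delta>1 [:0, 1:] j i - \<delta>2 [:0, 1:] j i = inner_t q (\<phi>s i) (\<psi>s j) (U j i)"
    using t by metis
  define U' where "U' j i = (if j < m \<and> i < n then U j i else 0)" for j i
  have entry: "\<delta>1 a j i - \<delta>2 a j i = tmul q (U j i) (dact q (\<phi>s i) a) - tmul q (dact q (\<psi>s j) a) (U j i)"
    if "a \<in> FqT q" "j < m" "i < n" for a j i
    using is_sder_unique[OF is_sder_diff[OF is_der_entry[OF d1] is_der_entry[OF d2]] is_sder_inner]
      U that by (simp add: inner_t_def)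
  have "\<delta>1 a j i = 0" "\<delta>2 a j i = 0" if "a \<in> FqT q" "\<not> (j < m \<and> i < n)" for a j i
    using d1 d2 that by (auto simp: is_der_def mats_def)
  then have "msub (\<delta>1 a) (\<delta>2 a) =
      msub (mmul q n U' (tact q n (prodmod n \<phi>s) a)) (mmul q m (tact q m (prodmod m \<psi>s) a) U')"
    if "a \<in> FqT q" for a
    using entry that
    by (intro ext) (auto simp: U'_def msub_def tact_prodmod mmul_prodmod_left mmul_prodmod_right)
  moreover have "U' \<in> mats m n" by (simp add: U'_def mats_def)
  ultimately show ?thesis unfolding is_inner_der_def by blast
qed

end

subsection \<open>The block t-module\<close>

definition block_indices :: "nat \<Rightarrow> nat \<Rightarrow> (nat \<Rightarrow> 'k::field poly) \<Rightarrow> (nat \<times> nat \<times> nat) set" where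
  "block_indices n m \<phi>s = (SIGMA j:{..<m}. SIGMA i:{..<n}. {..<degree (\<phi>s i)})"

text \<open>\<open>e\<close> numbers the coordinates \<open>x < rk \<phi>\<^sub>i\<close> of the blocks \<open>(j, i)\<close> of \<open>Ext\<^sup>1(\<Prod>\<phi>\<^sub>i, \<Prod>\<psi>\<^sub>j)\<close>.\<close>

locale rank_blocks = frobenius q tyk for q and tyk :: "'k::field itself" +
  fixes n m :: nat and \<phi>s \<psi>s :: "nat \<Rightarrow> 'k poly" and e :: "nat \<times> nat \<times> nat \<Rightarrow> nat"
  assumes degree_less_blocks: "\<And>i j. i < n \<Longrightarrow> j < m \<Longrightarrow> degree (\<psi>s j) < degree (\<phi>s i)"
    and index_bij: "bij_betw e (block_indices n m \<phi>s) {..<m * (\<Sum>i<n. degree (\<phi>s i))}"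
begin

abbreviation "D \<equiv> m * (\<Sum>i<n. degree (\<phi>s i))"

abbreviation "dec \<equiv> the_inv_into (block_indices n m \<phi>s) e"

abbreviation "red j i \<equiv> reduce q (\<phi>s i) (\<psi>s j)"

lemma rank_gap_block: "i < n \<Longrightarrow> j < m \<Longrightarrow> rank_gap q (\<phi>s i) (\<psi>s j)"
  using degree_less_blocks frobenius_axioms by (simp add: rank_gap_def rank_gap_axioms_def)

lemma block_indices_iff: "(j, i, x) \<in> block_indices n m \<phi>s \<longleftrightarrow> j < m \<and> i < n \<and> x < degree (\<phi>s i)"
  by (simp add: block_indices_def)

lemma enc_less: "j < m \<Longrightarrow> i < n \<Longrightarrow> x < degree (\<phi>s i) \<Longrightarrow> e (j, i, x) < D"
  using index_bij block_indices_iff[of j i x] unfolding bij_betw_def by auto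

lemma dec_enc: "j < m \<Longrightarrow> i < n \<Longrightarrow> x < degree (\<phi>s i) \<Longrightarrow> dec (e (j, i, x)) = (j, i, x)"
  using index_bij the_inv_into_f_f block_indices_iff by (metis bij_betw_def)

lemma dec_cases:
  assumes "k < D"
  obtains j i x where "dec k = (j, i, x)" "j < m" "i < n" "x < degree (\<phi>s i)" "e (j, i, x) = k"
proof -
  have k: "k \<in> e ` block_indices n m \<phi>s" using assms index_bij by (simp add: bij_betw_def)
  have inj: "inj_on e (block_indices n m \<phi>s)" using index_bij by (simp add: bij_betw_def)
  have "dec k \<in> block_indices n m \<phi>s" by (rule the_inv_into_into[OF inj k order_refl])
  moreover have "e (dec k) = k" by (rule f_the_inv_into_f[OF inj k])
  ultimately show ?thesis using that by (cases "dec k") (auto simp: block_indices_iff)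
qed

definition coords :: "'k tmat \<Rightarrow> nat \<Rightarrow> 'k" where
  "coords X = (\<lambda>k. if k < D then (case dec k of (j, i, x) \<Rightarrow> coeff (red j i (X j i)) x) else 0)"

definition Pi_t :: "'k tmat" where
  "Pi_t = (\<lambda>k k'. if k < D \<and> k' < D then
     (case dec k of (j, i, x) \<Rightarrow> case dec k' of (j', i', x') \<Rightarrow>
        if j = j' \<and> i = i' then mult_mat q (\<phi>s i) (\<psi>s j) x x' else 0) else 0)"

lemma coords_vecs: "coords X \<in> vecs D"
  by (simp add: coords_def vecs_def)

lemma coords_enc:
  "j < m \<Longrightarrow> i < n \<Longrightarrow> x < degree (\<phi>s i) \<Longrightarrow> coords X (e (j, i, x)) = coeff (red j i (X j i)) x"
  by (simp add: coords_def enc_less dec_enc)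

lemma coords_eq_iff: "coords X = coords Y \<longleftrightarrow> (\<forall>j<m. \<forall>i<n. red j i (X j i) = red j i (Y j i))"
proof
  assume eq: "coords X = coords Y"
  show "\<forall>j<m. \<forall>i<n. red j i (X j i) = red j i (Y j i)"
  proof (intro allI impI poly_eqI)
    fix j i x assume j: "j < m" and i: "i < n"
    show "coeff (red j i (X j i)) x = coeff (red j i (Y j i)) x"
    proof (cases "x < degree (\<phi>s i)")
      case True
      then show ?thesis using eq coords_enc[OF j i True] by metis
    next
      case False
      have "degree (red j i Z) < x" for Z
        using rank_gap.degree_reduce[OF rank_gap_block[OF i j], of Z] False by linarith
      then show ?thesis by (simp add: coeff_eq_0)
    qed
  qed
next
  assume "\<forall>j<m. \<forall>i<n. red j i (X j i) = red j i (Y j i)"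
  then show "coords X = coords Y"
    by (intro ext) (auto simp: coords_def elim!: dec_cases)
qed

lemma coords_add: "coords (madd X Y) = (\<lambda>k. coords X k + coords Y k)"
  by (intro ext) (auto simp: coords_def madd_def rank_gap.reduce_add[OF rank_gap_block] elim!: dec_cases)

lemma coords_surj:
  assumes "v \<in> vecs D"
  shows "\<exists>X. coords X = v"
proof
  define X where "X j i = (\<Sum>x<degree (\<phi>s i). monom (v (e (j, i, x))) x)" for j i
  have coeff_X: "coeff (X j i) x = (if x < degree (\<phi>s i) then v (e (j, i, x)) else 0)" for j i x
    by (simp add: X_def coeff_sum coeff_monom)
  have red_X: "red j i (X j i) = X j i" if "j < m" "i < n" for j i
    using that coeff_X rank_gap.rank_pos[OF rank_gap_block[OF that(2,1)]]
    by (intro rank_gap.reduce_reduced[OF rank_gap_block] degree_lessI) auto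
  show "coords X = v"
    using assms by (intro ext) (auto simp: coords_def vecs_def coeff_X red_X elim!: dec_cases)
qed

lemma Pi_t_mats: "Pi_t \<in> mats D D"
  by (simp add: mats_def Pi_t_def)

lemma mvec_Pi_t:
  assumes k: "k < D" and dec: "dec k = (j, i, x)" and j: "j < m" and i: "i < n"
  shows "mvec q D Pi_t w k = mvec q (degree (\<phi>s i)) (mult_mat q (\<phi>s i) (\<psi>s j)) (\<lambda>x'. w (e (j, i, x'))) x"
proof -
  let ?g = "\<lambda>k'. teval q (Pi_t k k') (w k')"
  let ?enc = "\<lambda>x'. e (j, i, x')"
  have "?g k' = 0" if "k' \<in> {..<D} - ?enc ` {..<degree (\<phi>s i)}" for k'
  proof -
    from that have "k' < D" by simp
    then obtain j' i' x' where "dec k' = (j', i', x')" "x' < degree (\<phi>s i')" "e (j', i', x') = k'"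
      by (rule dec_cases)
    with that k dec show ?thesis by (auto simp: Pi_t_def)
  qed
  then have "(\<Sum>k'<D. ?g k') = (\<Sum>k'\<in>?enc ` {..<degree (\<phi>s i)}. ?g k')"
    using enc_less[OF j i] by (intro sum.mono_neutral_right) auto
  also have "\<dots> = (\<Sum>x'<degree (\<phi>s i). ?g (?enc x'))"
    using dec_enc[OF j i] by (intro sum.reindex[unfolded comp_def] inj_onI) (metis lessThan_iff prod.inject)
  also have "\<dots> = mvec q (degree (\<phi>s i)) (mult_mat q (\<phi>s i) (\<psi>s j)) (\<lambda>x'. w (?enc x')) x"
    using k dec j i by (simp add: mvec_def Pi_t_def enc_less dec_enc)
  finally show ?thesis by (simp add: mvec_def)
qed

lemma coords_tmul: "coords (\<lambda>j i. tmul q (\<psi>s j) (X j i)) = mvec q D Pi_t (coords X)"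
proof (rule ext)
  fix k
  show "coords (\<lambda>j i. tmul q (\<psi>s j) (X j i)) k = mvec q D Pi_t (coords X) k"
  proof (cases "k < D")
    case True
    then obtain j i x where ji: "dec k = (j, i, x)" "j < m" "i < n" by (rule dec_cases)
    have "mvec q D Pi_t (coords X) k =
        mvec q (degree (\<phi>s i)) (mult_mat q (\<phi>s i) (\<psi>s j)) (coeff (red j i (X j i))) x"
      using ji by (simp add: mvec_Pi_t[OF True] coords_enc cong: mvec_cong)
    then show ?thesis
      using True ji by (simp add: coords_def rank_gap.mvec_mult_mat[OF rank_gap_block])
  next
    case False
    then show ?thesis using mvec_vecs[OF Pi_t_mats] by (simp add: coords_def vecs_def)
  qed
qed

lemma coords_tmul_tpow:
  "coords (\<lambda>j i. tmul q (tpow q (\<psi>s j) l) (X j i)) = (mvec q D Pi_t ^^ l) (coords X)"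
proof (induction l)
  case (Suc l)
  then show ?case
    using coords_tmul[of "\<lambda>j i. tmul q (tpow q (\<psi>s j) l) (X j i)"] by (simp add: tmul_assoc)
qed simp

lemma coords_tact:
  assumes a: "a \<in> FqT q"
  shows "coords (\<lambda>j i. tmul q (dact q (\<psi>s j) a) (X j i)) = mvec q D (tact q D Pi_t a) (coords X)"
proof -
  have "coords (\<lambda>j i. tmul q (dact q (\<psi>s j) a) (X j i)) k =
      (\<Sum>l\<le>degree a. coeff a l * coords (\<lambda>j i. tmul q (tpow q (\<psi>s j) l) (X j i)) k)" for k
    using FqT_coeff[OF a]
    by (cases "k < D") (auto simp: coords_def dact_def tmul_sum_left tmul_smult_left coeff_sum
        rank_gap.reduce_sum[OF rank_gap_block] rank_gap.reduce_smult[OF rank_gap_block]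
        elim!: dec_cases)
  then show ?thesis
    by (intro ext) (simp add: mvec_tact mvec_mpow[OF coords_vecs] coords_tmul_tpow)
qed

lemma Pi_t_is_tmodule:
  assumes "\<forall>j<m. coeff (\<psi>s j) 0 = \<theta>"
  shows "is_tmodule q \<theta> D Pi_t"
proof -
  have "coeff (Pi_t k k') 0 = (if k = k' \<and> k < D then \<theta> else 0)" for k k'
  proof (cases "k < D \<and> k' < D")
    case True
    then have "k < D" "k' < D" by simp_all
    obtain j i x where k: "dec k = (j, i, x)" "j < m" "i < n" "x < degree (\<phi>s i)" "e (j, i, x) = k"
      using \<open>k < D\<close> by (rule dec_cases)
    obtain j' i' x' where k': "dec k' = (j', i', x')" "e (j', i', x') = k'"
      using \<open>k' < D\<close> by (rule dec_cases)
    have c0: "coeff (mult_mat q (\<phi>s i) (\<psi>s j) x x'') 0 = (if x = x'' then \<theta> else 0)" for x''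
      using rank_gap.coeff_mult_mat_0[OF rank_gap_block[OF k(3,2)], of x x''] k(2,4) assms by simp
    have "k = k' \<longleftrightarrow> (j, i, x) = (j', i', x')" using k(1,5) k'(1,2) by metis
    then show ?thesis
      using True k(1) k'(1) c0 by (cases "j = j' \<and> i = i'") (auto simp: Pi_t_def)
  next
    case False
    then have "Pi_t k k' = 0" by (auto simp: Pi_t_def)
    then show ?thesis using False by auto
  qed
  then show ?thesis
    unfolding is_tmodule_def knilpotent_def using Pi_t_mats by (intro conjI exI[of _ 0]) auto
qed

theorem ext_iso_MW_blocks:
  assumes "\<forall>j<m. coeff (\<psi>s j) 0 = \<theta>"
  shows "is_tmodule q \<theta> D Pi_t \<and>
    ext_iso_MW q n (prodmod n \<phi>s) m (prodmod m \<psi>s) D Pi_t (\<lambda>\<delta>. coords (\<delta> [:0, 1:]))"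
  unfolding ext_iso_MW_def
proof (intro conjI allI impI ballI)
  show "is_tmodule q \<theta> D Pi_t" using assms by (rule Pi_t_is_tmodule)
next
  fix v :: "nat \<Rightarrow> 'k" assume "v \<in> vecs D"
  then obtain X where X: "coords X = v" using coords_surj by blast
  obtain \<delta> where \<delta>: "is_der q n (prodmod n \<phi>s) m (prodmod m \<psi>s) \<delta>"
    "\<forall>j<m. \<forall>i<n. \<delta> [:0, 1:] j i = X j i"
    using is_der_of_entries by blast
  have "coords (\<delta> [:0, 1:]) = v" using \<delta>(2) X coords_eq_iff[of "\<delta> [:0, 1:]" X] by simp
  then show "\<exists>\<delta>. is_der q n (prodmod n \<phi>s) m (prodmod m \<psi>s) \<delta> \<and> coords (\<delta> [:0, 1:]) = v"
    using \<delta>(1) by blast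
next
  fix \<delta>1 \<delta>2
  assume d1: "is_der q n (prodmod n \<phi>s) m (prodmod m \<psi>s) \<delta>1"
    and d2: "is_der q n (prodmod n \<phi>s) m (prodmod m \<psi>s) \<delta>2"
  show "coords (\<delta>1 [:0, 1:]) = coords (\<delta>2 [:0, 1:]) \<longleftrightarrow>
      is_inner_der q n (prodmod n \<phi>s) m (prodmod m \<psi>s) (\<lambda>a. msub (\<delta>1 a) (\<delta>2 a))"
    using inner_der_at_t is_inner_derI[OF d1 d2]
    by (auto simp: coords_eq_iff rank_gap.reduce_eq_iff[OF rank_gap_block] msub_def)
  show "coords (madd (\<delta>1 [:0, 1:]) (\<delta>2 [:0, 1:])) =
      (\<lambda>k. coords (\<delta>1 [:0, 1:]) k + coords (\<delta>2 [:0, 1:]) k)"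
    by (rule coords_add)
next
  fix a :: "'k poly" and \<delta> assume "a \<in> FqT q"
  then show "coords (mmul q m (tact q m (prodmod m \<psi>s) a) (\<delta> [:0, 1:])) =
      mvec q D (tact q D Pi_t a) (coords (\<delta> [:0, 1:]))"
    by (simp add: coords_tact[symmetric] coords_eq_iff tact_prodmod mmul_prodmod_left)
qed (rule coords_vecs)

end

theorem theorem6p1:
  fixes p q k n m :: nat and \<theta> :: "'k::field" and \<phi>s \<psi>s :: "nat \<Rightarrow> 'k poly"
  assumes "prime p" and "CHAR('k) = p" and "1 \<le> k" and "q = p ^ k"
    and "card {x::'k. x ^ q = x} = q"
    and "1 \<le> n" and "1 \<le> m"
    and "\<forall>i<n. is_drinfeld \<theta> (\<phi>s i)" and "\<forall>j<m. is_drinfeld \<theta> (\<psi>s j)"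
    and "\<forall>i<n. \<forall>j<m. drank (\<phi>s i) > drank (\<psi>s j)"
  shows "\<exists>Pit F. is_tmodule q \<theta> (m * (\<Sum>i<n. drank (\<phi>s i))) Pit \<and>
           ext_iso_MW q n (prodmod n \<phi>s) m (prodmod m \<psi>s)
             (m * (\<Sum>i<n. drank (\<phi>s i))) Pit F"
proof -
  have "prime CHAR('k)" using assms(1,2) by simp
  then have frob: "frobenius TYPE('k) q"
    using assms(1,2,4) by unfold_locales (simp_all add: prime_gt_0_nat freshmans_dream')
  have "card (block_indices n m \<phi>s) = card {..<m * (\<Sum>i<n. degree (\<phi>s i))}"
    by (simp add: block_indices_def)
  then obtain e where "bij_betw e (block_indices n m \<phi>s) {..<m * (\<Sum>i<n. degree (\<phi>s i))}"
    by (metis finite_same_card_bij finite_lessThan finite_SigmaI block_indices_def)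
  then interpret rank_blocks q "TYPE('k)" n m \<phi>s \<psi>s e
    using frob assms(10) by (intro rank_blocks.intro rank_blocks_axioms.intro) (auto simp: drank_def)
  show ?thesis
    using ext_iso_MW_blocks assms(9) unfolding drank_def is_drinfeld_def by blast
qed

end
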